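(* Let $m\ge 2$ be even and $n$ a multiple of $m$. Every set $S\subseteq\{0,1\}^n$ of mutually incomparable solutions with respect to $m$-COCZ satisfies $|S|\le(n/m+1)^{m/2}$. Moreover, a Pareto-optimal set of $m$-COCZ consisting of mutually incomparable solutions (one solution for each Pareto-optimal fitness vector) is a set of mutually incomparable solutions of maximum cardinality, and its cardinality is exactly $(n/m+1)^{m/2}$.
   Context: $m$-COCZ: $\{0,1\}^n\to\mathbb N_0^m$, $f_k(x)=\sum_{i=1}^{n/2}x_i+g_k(x)$, where the second half $x_{n/2+1},\dots,x_n$ is split into $m/2$ consecutive blocks of length $n/m$, and for block $b\in[m/2]$, $g_{2b-1}(x)$ is the number of ones and $g_{2b}(x)$ the number of zeros in block $b$. All objectives are maximized. $x\succeq y$ iff $f_j(x)\ge f_j(y)$ for all $j$; $x,y$ are incomparable if neither $x\succeq y$ nor $y\succeq x$; $S$ is a set of mutually incomparable solutions if any two distinct elements of $S$ are incomparable. A point is Pareto-optimal if no other point dominates it. *)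

theory Defs
  imports Main
begin

text \<open>Bit strings in {0,1}^n are boolean lists of length n; position p (0-based)
  corresponds to x_{p+1} in the paper. Objectives are indexed k = 1..m.\<close>

definition bitstrings :: "nat \<Rightarrow> bool list set" where
  "bitstrings n = {x. length x = n}"

definition ones_in :: "bool list \<Rightarrow> nat \<Rightarrow> nat \<Rightarrow> nat" where
  "ones_in x i j = card {p. i \<le> p \<and> p < j \<and> x ! p}"

definition zeros_in :: "bool list \<Rightarrow> nat \<Rightarrow> nat \<Rightarrow> nat" where
  "zeros_in x i j = card {p. i \<le> p \<and> p < j \<and> \<not> x ! p}"

text \<open>Block b (1-based, b = 1..m/2) of the second half consists of positions
  n/2 + (b-1)(n/m) + 1, ..., n/2 + b(n/m) (1-based).\<close>
definition block_start :: "nat \<Rightarrow> nat \<Rightarrow> nat \<Rightarrow> nat" where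
  "block_start m n b = n div 2 + (b - 1) * (n div m)"

definition cocz_g :: "nat \<Rightarrow> nat \<Rightarrow> nat \<Rightarrow> bool list \<Rightarrow> nat" where
  "cocz_g m n k x =
     (let b = (k + 1) div 2; s = block_start m n b; e = s + n div m in
      if odd k then ones_in x s e else zeros_in x s e)"

definition cocz_f :: "nat \<Rightarrow> nat \<Rightarrow> nat \<Rightarrow> bool list \<Rightarrow> nat" where
  "cocz_f m n k x = ones_in x 0 (n div 2) + cocz_g m n k x"

definition cocz :: "nat \<Rightarrow> nat \<Rightarrow> bool list \<Rightarrow> nat list" where
  "cocz m n x = map (\<lambda>k. cocz_f m n k x) [1..<m+1]"

definition weakly_dom :: "nat \<Rightarrow> nat \<Rightarrow> bool list \<Rightarrow> bool list \<Rightarrow> bool" where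
  "weakly_dom m n x y = (\<forall>j\<in>{1..m}. cocz_f m n j x \<ge> cocz_f m n j y)"

definition dominates :: "nat \<Rightarrow> nat \<Rightarrow> bool list \<Rightarrow> bool list \<Rightarrow> bool" where
  "dominates m n x y = (weakly_dom m n x y \<and> \<not> weakly_dom m n y x)"

definition incomparable :: "nat \<Rightarrow> nat \<Rightarrow> bool list \<Rightarrow> bool list \<Rightarrow> bool" where
  "incomparable m n x y = (\<not> weakly_dom m n x y \<and> \<not> weakly_dom m n y x)"

definition mutually_incomparable :: "nat \<Rightarrow> nat \<Rightarrow> bool list set \<Rightarrow> bool" where
  "mutually_incomparable m n S =
     (\<forall>x\<in>S. \<forall>y\<in>S. x \<noteq> y \<longrightarrow> incomparable m n x y)"

definition pareto_optimal :: "nat \<Rightarrow> nat \<Rightarrow> bool list \<Rightarrow> bool" where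
  "pareto_optimal m n x =
     (x \<in> bitstrings n \<and> \<not> (\<exists>y\<in>bitstrings n. dominates m n y x))"

end

theory Submission
  imports Defs
begin

text \<open>Write h = m/2 and k = n/m, and let F(x) be the number of ones in the first half.
  If c_b(x) is the number of ones in block b, then f_{2b-1}(x) = F(x) + c_b(x) and
  f_{2b}(x) = F(x) + k - c_b(x). Two strings with the same block profile (c_1, ..., c_h)
  therefore have fitness vectors differing by the constant F(x) - F(y) and are comparable,
  so an incomparable set injects into {0..k}^h. Conversely every profile is realised by a
  string whose first half is all ones; such a string is Pareto optimal because
  f_{2b-1} + f_{2b} = 2 F + k is maximal, and its profile can be read off its fitness vector,
  so there are at least (k+1)^h Pareto-optimal fitness vectors.\<close>

lemma ones_in_add_zeros_in: "ones_in x s e + zeros_in x s e = e - s"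
proof -
  have "card {p. s \<le> p \<and> p < e \<and> x ! p} + card {p. s \<le> p \<and> p < e \<and> \<not> x ! p}
      = card ({p. s \<le> p \<and> p < e \<and> x ! p} \<union> {p. s \<le> p \<and> p < e \<and> \<not> x ! p})"
    by (rule card_Un_disjoint [symmetric]) auto
  also have "{p. s \<le> p \<and> p < e \<and> x ! p} \<union> {p. s \<le> p \<and> p < e \<and> \<not> x ! p} = {s..<e}"
    by auto
  finally show ?thesis unfolding ones_in_def zeros_in_def by simp
qed

lemma ones_in_le: "ones_in x s e \<le> e - s"
  using ones_in_add_zeros_in [of x s e] by simp

lemma ones_in_map_upt:
  assumes "e \<le> n"
  shows "ones_in (map P [0..<n]) s e = card {p. s \<le> p \<and> p < e \<and> P p}"
proof -
  have "{p. s \<le> p \<and> p < e \<and> map P [0..<n] ! p} = {p. s \<le> p \<and> p < e \<and> P p}"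
    using assms by auto
  then show ?thesis unfolding ones_in_def by simp
qed

lemma finite_bitstrings: "finite (bitstrings n)"
proof -
  have "bitstrings n = {xs. set xs \<subseteq> UNIV \<and> length xs = n}"
    unfolding bitstrings_def by auto
  then show ?thesis using finite_lists_length_eq [of "UNIV :: bool set" n] by simp
qed

locale cocz_blocks =
  fixes m n h k :: nat
  assumes m_eq: "m = 2 * h" and n_eq: "n = m * k"
begin

text \<open>Blocks are indexed from 0 here: block i is block i+1 of the paper and governs
  objectives 2i+1 and 2i+2.\<close>

definition block_ones :: "bool list \<Rightarrow> nat \<Rightarrow> nat" where
  "block_ones x i = ones_in x (h*k + i*k) (h*k + i*k + k)"

definition block_profile :: "bool list \<Rightarrow> nat list" where
  "block_profile x = map (block_ones x) [0..<h]"

lemma half_eq: "n div 2 = h * k"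
  using m_eq n_eq by simp

lemma block_ones_le: "block_ones x i \<le> k"
  unfolding block_ones_def using ones_in_le by (metis add_diff_cancel_left')

lemma block_profile_in_lists: "block_profile x \<in> {v. set v \<subseteq> {0..k} \<and> length v = h}"
  using block_ones_le by (auto simp: block_profile_def)

lemma objective_cases:
  assumes "j \<in> {1..m}"
  obtains i where "i < h" "j = 2*i + 1" | i where "i < h" "j = 2*i + 2"
proof (cases "odd j")
  case True
  then obtain i where "j = 2*i + 1" by (metis oddE)
  with assms m_eq that(1) show ?thesis by auto
next
  case False
  then obtain i' where "j = 2*i'" by (metis evenE)
  with assms obtain i where "j = 2*i + 2" by (cases i') auto
  with assms m_eq that(2) show ?thesis by auto
qed

lemma block_start_eq:
  assumes "i < h"
  shows "block_start m n (i + 1) = h*k + i*k"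
  using assms m_eq n_eq unfolding block_start_def by simp

lemma cocz_f_odd:
  assumes "i < h"
  shows "cocz_f m n (2*i + 1) x = ones_in x 0 (h*k) + block_ones x i"
proof -
  have "(2*i + 1 + 1) div 2 = i + 1" by simp
  moreover have "n div m = k" using assms m_eq n_eq by simp
  ultimately show ?thesis
    unfolding cocz_f_def cocz_g_def Let_def block_ones_def
    using block_start_eq [OF assms] half_eq by simp
qed

lemma cocz_f_even:
  assumes "i < h"
  shows "cocz_f m n (2*i + 2) x + block_ones x i = ones_in x 0 (h*k) + k"
proof -
  have "(2*i + 2 + 1) div 2 = i + 1" by simp
  moreover have "n div m = k" using assms m_eq n_eq by simp
  ultimately show ?thesis
    unfolding cocz_f_def cocz_g_def Let_def block_ones_def
    using block_start_eq [OF assms] half_eq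
      ones_in_add_zeros_in [of x "h*k + i*k" "h*k + i*k + k"] by simp
qed

lemma cocz_f_pair_sum:
  assumes "i < h"
  shows "cocz_f m n (2*i + 1) x + cocz_f m n (2*i + 2) x = 2 * ones_in x 0 (h*k) + k"
  using cocz_f_odd [OF assms, of x] cocz_f_even [OF assms, of x] by simp

lemma weakly_dom_if_same_profile:
  assumes "block_profile x = block_profile y" and "ones_in y 0 (h*k) \<le> ones_in x 0 (h*k)"
  shows "weakly_dom m n x y"
  unfolding weakly_dom_def
proof
  have same_block: "block_ones x i = block_ones y i" if "i < h" for i
    using assms(1) that by (metis block_profile_def diff_zero nth_map_upt add_0)
  fix j assume "j \<in> {1..m}"
  then show "cocz_f m n j y \<le> cocz_f m n j x"
  proof (cases rule: objective_cases)
    case (1 i)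
    with same_block assms(2) show ?thesis using cocz_f_odd by simp
  next
    case (2 i)
    with same_block assms(2) show ?thesis using cocz_f_even [of i x] cocz_f_even [of i y] by simp
  qed
qed

lemma inj_on_block_profile:
  assumes "mutually_incomparable m n S"
  shows "inj_on block_profile S"
proof (rule inj_onI, rule ccontr)
  fix x y
  assume "x \<in> S" "y \<in> S" "block_profile x = block_profile y" "x \<noteq> y"
  then have "incomparable m n x y"
    using assms unfolding mutually_incomparable_def by blast
  moreover have "weakly_dom m n x y \<or> weakly_dom m n y x"
    using weakly_dom_if_same_profile \<open>block_profile x = block_profile y\<close> nat_le_linear by metis
  ultimately show False unfolding incomparable_def by blast
qed

lemma card_mutually_incomparable_le:
  assumes "mutually_incomparable m n S"
  shows "card S \<le> (k + 1) ^ h"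
proof -
  have "card S \<le> card {v. set v \<subseteq> {0..k} \<and> length v = h}"
    using inj_on_block_profile [OF assms] block_profile_in_lists
    by (intro card_inj_on_le) (auto intro: finite_lists_length_eq)
  then show ?thesis by (simp add: card_lists_length_eq)
qed

lemma pareto_optimal_if_front_full:
  assumes "x \<in> bitstrings n" and full: "ones_in x 0 (h*k) = h*k"
  shows "pareto_optimal m n x"
  unfolding pareto_optimal_def dominates_def
proof (intro conjI assms(1) notI)
  assume "\<exists>y\<in>bitstrings n. weakly_dom m n y x \<and> \<not> weakly_dom m n x y"
  then obtain y where y_dom: "weakly_dom m n y x" and x_not_dom: "\<not> weakly_dom m n x y"
    by blast
  have y_front_le: "ones_in y 0 (h*k) \<le> h*k"
    using ones_in_le [of y 0 "h*k"] by simp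
  have "cocz_f m n j y \<le> cocz_f m n j x" if "j \<in> {1..m}" for j
  proof -
    obtain i where "i < h" and pair: "j \<in> {2*i + 1, 2*i + 2}"
      using \<open>j \<in> {1..m}\<close> by (cases rule: objective_cases) auto
    have "2*i + 1 \<in> {1..m}" "2*i + 2 \<in> {1..m}" using \<open>i < h\<close> m_eq by auto
    then have "cocz_f m n (2*i + 1) x \<le> cocz_f m n (2*i + 1) y"
              "cocz_f m n (2*i + 2) x \<le> cocz_f m n (2*i + 2) y"
      using y_dom unfolding weakly_dom_def by auto
    with cocz_f_pair_sum [OF \<open>i < h\<close>, of x] cocz_f_pair_sum [OF \<open>i < h\<close>, of y] full y_front_le pair
    show ?thesis by auto
  qed
  with x_not_dom show False unfolding weakly_dom_def by blast
qed

lemma block_div_mod: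
  assumes "i < h" and "h*k + i*k \<le> p" and "p < h*k + i*k + k"
  shows "(p - h*k) div k = i" and "(p - h*k) mod k = p - (h*k + i*k)"
proof -
  obtain r where "p = h*k + i*k + r" "r < k"
    using assms(2,3) by (metis add_less_cancel_left le_add_diff_inverse)
  then show "(p - h*k) div k = i" "(p - h*k) mod k = p - (h*k + i*k)" by auto
qed

lemma exists_front_full_with_profile:
  assumes "set v \<subseteq> {0..k}" and "length v = h"
  shows "\<exists>x\<in>bitstrings n. ones_in x 0 (h*k) = h*k \<and> block_profile x = v"
proof -
  define P where "P p \<longleftrightarrow> p < h*k \<or> (p - h*k) mod k < v ! ((p - h*k) div k)" for p
  define x where "x = map P [0..<n]"
  have "{p. 0 \<le> p \<and> p < h*k \<and> P p} = {0..<h*k}" unfolding P_def by auto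
  then have "ones_in x 0 (h*k) = h*k"
    unfolding x_def using m_eq n_eq by (subst ones_in_map_upt) auto
  moreover have "block_ones x i = v ! i" if "i < h" for i
  proof -
    have "i*k + k \<le> h*k" using that by (metis add.commute mult_Suc less_eq_Suc_le mult_le_mono1)
    then have "h*k + i*k + k \<le> n" using m_eq n_eq by simp
    moreover have "v ! i \<le> k" using assms that by (metis atLeastAtMost_iff nth_mem subsetD)
    moreover have "{p. h*k + i*k \<le> p \<and> p < h*k + i*k + k \<and> P p} = {h*k + i*k..<h*k + i*k + v ! i}"
      using \<open>v ! i \<le> k\<close> block_div_mod [OF that] unfolding P_def by auto
    ultimately show ?thesis
      unfolding block_ones_def x_def by (simp add: ones_in_map_upt)
  qed
  then have "block_profile x = v"
    using assms(2) by (intro nth_equalityI) (auto simp: block_profile_def)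
  moreover have "x \<in> bitstrings n" unfolding bitstrings_def x_def by simp
  ultimately show ?thesis by blast
qed

lemma cocz_nth_odd_objective:
  assumes "i < h"
  shows "cocz m n x ! (2*i) = cocz_f m n (2*i + 1) x"
proof -
  have "2*i < length [1..<m+1]" using assms m_eq by simp
  then show ?thesis unfolding cocz_def by (simp del: upt_Suc)
qed

lemma block_profile_from_cocz:
  assumes "ones_in x 0 (h*k) = h*k"
  shows "block_profile x = map (\<lambda>i. cocz m n x ! (2*i) - h*k) [0..<h]"
proof (rule nth_equalityI)
  fix i assume "i < length (block_profile x)"
  then have "i < h" by (simp add: block_profile_def)
  then show "block_profile x ! i = map (\<lambda>i. cocz m n x ! (2*i) - h*k) [0..<h] ! i"
    using assms cocz_nth_odd_objective [of i x] cocz_f_odd [of i x] by (simp add: block_profile_def)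
qed (simp add: block_profile_def)

lemma card_pareto_front_ge: "(k + 1) ^ h \<le> card (cocz m n ` {x. pareto_optimal m n x})"
proof -
  let ?decode = "\<lambda>c. map (\<lambda>i. c ! (2*i) - h*k) [0..<h]"
  let ?front = "cocz m n ` {x. pareto_optimal m n x}"
  have "{v. set v \<subseteq> {0..k} \<and> length v = h} \<subseteq> ?decode ` ?front"
  proof
    fix v assume "v \<in> {v. set v \<subseteq> {0..k} \<and> length v = h}"
    then obtain x where "x \<in> bitstrings n" "ones_in x 0 (h*k) = h*k" "block_profile x = v"
      using exists_front_full_with_profile by blast
    then have "cocz m n x \<in> ?front" and "?decode (cocz m n x) = v"
      using pareto_optimal_if_front_full block_profile_from_cocz by auto
    then show "v \<in> ?decode ` ?front" by force
  qed
  moreover have "finite ?front"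
    using finite_bitstrings by (rule finite_surj) (auto simp: pareto_optimal_def)
  ultimately have "card {v. set v \<subseteq> {0..k} \<and> length v = h} \<le> card (?decode ` ?front)"
    by (intro card_mono) auto
  also have "\<dots> \<le> card ?front"
    using \<open>finite ?front\<close> by (rule card_image_le)
  finally show ?thesis by (simp add: card_lists_length_eq)
qed

end

theorem mainTheorem8:
  fixes m n :: nat
  assumes "m \<ge> 2" and "even m" and "m dvd n"
  shows "(\<forall>S. S \<subseteq> bitstrings n \<and> mutually_incomparable m n S
             \<longrightarrow> card S \<le> (n div m + 1) ^ (m div 2))
       \<and> (\<forall>P. P \<subseteq> bitstrings n \<and> mutually_incomparable m n P
             \<and> (\<forall>x\<in>P. pareto_optimal m n x)
             \<and> cocz m n ` P = cocz m n ` {x. pareto_optimal m n x}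
             \<longrightarrow> (\<forall>S. S \<subseteq> bitstrings n \<and> mutually_incomparable m n S
                      \<longrightarrow> card S \<le> card P)
                 \<and> card P = (n div m + 1) ^ (m div 2))"
proof -
  interpret cocz_blocks m n "m div 2" "n div m"
    using assms(2,3) by unfold_locales auto
  have card_P: "card P = (n div m + 1) ^ (m div 2)"
    if "P \<subseteq> bitstrings n" "mutually_incomparable m n P"
      "cocz m n ` P = cocz m n ` {x. pareto_optimal m n x}" for P
  proof (rule antisym)
    show "card P \<le> (n div m + 1) ^ (m div 2)"
      using card_mutually_incomparable_le that(2) .
    have "finite P" using finite_subset [OF that(1) finite_bitstrings] .
    then show "(n div m + 1) ^ (m div 2) \<le> card P"
      using card_pareto_front_ge card_image_le [of P "cocz m n"] that(3) by simp
  qed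
  show ?thesis using card_mutually_incomparable_le card_P by metis
qed

end
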